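(* For fixed $y,\eta\in(0,\infty)$, the function $\lambda\mapsto G_2(y,\eta,\lambda)$, given for $\lambda\in\mathbb{C}\setminus\mathbb{R}$ and $0<y\le\eta$ by $$G_2(y,\eta,\lambda)=\frac{w_1(\lambda,y)w_1(\lambda,\eta)}{2\alpha\,a(\lambda)}+\frac{w_2(\lambda,y)w_1(\lambda,\eta)}{2\alpha}$$ (and symmetrically for $y>\eta$), extends to a holomorphic function on $\mathbb{C}\setminus[\frac14,\infty)$; its only singularities lie on the branch cut $[\frac14,\infty)$.
   Context: $P(y)=\frac{e^{4y}+10e^{2y}+1}{4(e^{2y}-1)^2}$. For $\lambda\in\mathbb{C}$ write $\frac14-\lambda=re^{i\phi}$ with $r\ge0$, $\phi\in[-\pi,\pi)$, and $\alpha=\sqrt r\,e^{i\phi/2}$. Define $a(\lambda)=-\dfrac{\Gamma(1+\alpha)\Gamma(\frac32-\alpha)}{\Gamma(1-\alpha)\Gamma(\frac32+\alpha)}$, $w_1(\lambda,y)=e^{(1-\alpha)y}(e^{2y}-1)^{-1/2}\,{}_2F_1(-\tfrac12,-\tfrac12+\alpha;1+\alpha;e^{-2y})$, $w_2(\lambda,y)=e^{(1+\alpha)y}(e^{2y}-1)^{-1/2}\,{}_2F_1(-\tfrac12,-\tfrac12-\alpha;1-\alpha;e^{-2y})$. $G_2$ is the Green's function of $\frac{d^2}{dy^2}-P(y)+\lambda$ on $(0,\infty)$. *)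

theory Defs
  imports "HOL-Analysis.Analysis"
begin

definition hyp2f1 :: "complex \<Rightarrow> complex \<Rightarrow> complex \<Rightarrow> complex \<Rightarrow> complex" where
  "hyp2f1 a b c z =
     (\<Sum>n. pochhammer a n * pochhammer b n / (pochhammer c n * fact n) * z ^ n)"

text \<open>The paper's square-root convention: 1/4 - lambda = r e^{i phi}, phi in [-pi,pi),
  alpha = sqrt r e^{i phi/2}.  Isabelle's Arg takes values in (-pi,pi], so the value pi
  is moved to -pi.\<close>
definition phase :: "complex \<Rightarrow> real" where
  "phase z = (if Arg z = pi then - pi else Arg z)"

definition alpha :: "complex \<Rightarrow> complex" where
  "alpha lam = complex_of_real (sqrt (cmod (1/4 - lam))) * exp (\<i> * complex_of_real (phase (1/4 - lam) / 2))"

definition a_coef :: "complex \<Rightarrow> complex" where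
  "a_coef lam = - (Gamma (1 + alpha lam) * Gamma (3/2 - alpha lam)) /
                   (Gamma (1 - alpha lam) * Gamma (3/2 + alpha lam))"

definition w1 :: "complex \<Rightarrow> real \<Rightarrow> complex" where
  "w1 lam y = exp ((1 - alpha lam) * complex_of_real y)
      * complex_of_real ((exp (2*y) - 1) powr (-1/2))
      * hyp2f1 (-1/2) (-1/2 + alpha lam) (1 + alpha lam) (complex_of_real (exp (-2*y)))"

definition w2 :: "complex \<Rightarrow> real \<Rightarrow> complex" where
  "w2 lam y = exp ((1 + alpha lam) * complex_of_real y)
      * complex_of_real ((exp (2*y) - 1) powr (-1/2))
      * hyp2f1 (-1/2) (-1/2 - alpha lam) (1 - alpha lam) (complex_of_real (exp (-2*y)))"

definition G2 :: "real \<Rightarrow> real \<Rightarrow> complex \<Rightarrow> complex" where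
  "G2 y eta lam =
     (if y \<le> eta then
        w1 lam y * w1 lam eta / (2 * alpha lam * a_coef lam) + w2 lam y * w1 lam eta / (2 * alpha lam)
      else
        w1 lam eta * w1 lam y / (2 * alpha lam * a_coef lam) + w2 lam eta * w1 lam y / (2 * alpha lam))"

end

(*
  Put alpha = csqrt (1/4 - lambda); this maps the complement of [1/4, inf) holomorphically onto the
  right half-plane.  Dividing the Gauss series by Gamma c gives a series that is entire in its
  parameters, so w1 = Gamma (1 + alpha) * W alpha and w2 = Gamma (1 - alpha) * W (- alpha) with W
  entire in alpha.  Euler's reflection formula turns G2 into
    pi / 2 * Gamma (3/2 + alpha) * W(max y eta, alpha) * D(min y eta, alpha) / sin (pi * alpha),
  D(t, alpha) = W(t, -alpha) / Gamma (3/2 + alpha) - W(t, alpha) / Gamma (3/2 - alpha) being entire.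
  In the right half-plane sin (pi * alpha) has only the simple zeros alpha = n, and D vanishes
  there: at c = 1 - n the regularised series is (a)_n (b)_n z^n times the one at c = 1 + n.  So
  the quotient extends holomorphically to Re alpha > 0; composing with alpha(lambda) gives the claim.
*)

theory Submission
  imports Defs "HOL-Complex_Analysis.Complex_Analysis" "HOL-Real_Asymp.Real_Asymp"
begin

lemma norm_pochhammer_le:
  fixes x :: "'a :: real_normed_field"
  shows "norm (pochhammer x k) \<le> pochhammer (norm x) k"
proof (induction k)
  case (Suc k)
  have "norm (pochhammer x (Suc k)) = norm (pochhammer x k) * norm (x + of_nat k)"
    by (simp add: pochhammer_Suc norm_mult)
  also have "\<dots> \<le> pochhammer (norm x) k * (norm x + of_nat k)"
    by (intro mult_mono Suc.IH) (auto simp: pochhammer_prod prod_nonneg intro: norm_triangle_le)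
  finally show ?case by (simp add: pochhammer_Suc)
qed simp

lemma pochhammer_mono:
  fixes x y :: "'a :: linordered_semidom"
  shows "0 \<le> x \<Longrightarrow> x \<le> y \<Longrightarrow> pochhammer x n \<le> pochhammer y n"
  unfolding pochhammer_prod by (intro prod_mono) auto

lemma fact_le_norm_pochhammer:
  fixes w :: complex
  assumes "1 \<le> Re w"
  shows "fact m \<le> norm (pochhammer w m)"
proof (induction m)
  case (Suc m)
  have "real (Suc m) \<le> Re (w + of_nat m)" using assms by simp
  also have "\<dots> \<le> norm (w + of_nat m)" by (rule complex_Re_le_cmod)
  finally have "real (Suc m) \<le> norm (w + of_nat m)" .
  then have "fact m * real (Suc m) \<le> norm (pochhammer w m) * norm (w + of_nat m)"
    by (intro mult_mono Suc.IH) auto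
  then show ?case by (simp add: pochhammer_Suc norm_mult mult.commute)
qed simp

lemma norm_rGamma_add_nat_le:
  fixes w :: complex
  assumes "1 \<le> Re w"
  shows "norm (rGamma (w + of_nat m)) \<le> norm (rGamma w) / fact m"
proof -
  have le: "fact m \<le> norm (pochhammer w m)" by (rule fact_le_norm_pochhammer[OF assms])
  then have pos: "0 < norm (pochhammer w m)" by (metis fact_gt_zero less_le_trans)
  moreover have "rGamma w = pochhammer w m * rGamma (w + of_nat m)" by (rule pochhammer_rGamma)
  ultimately have "norm (rGamma (w + of_nat m)) = norm (rGamma w) / norm (pochhammer w m)"
    by (simp add: norm_mult)
  also have "\<dots> \<le> norm (rGamma w) / fact m"
    using le pos by (intro divide_left_mono) auto
  finally show ?thesis .
qed

lemma summable_ratio_test_tendsto: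
  fixes f :: "nat \<Rightarrow> real"
  assumes pos: "eventually (\<lambda>n. f n > 0) sequentially"
    and lim: "((\<lambda>n. f (Suc n) / f n) \<longlongrightarrow> l) sequentially" and "l < 1"
  shows "summable f"
proof -
  define c where "c = (l + 1) / 2"
  have "c < 1" "l < c" using \<open>l < 1\<close> by (simp_all add: c_def)
  have "eventually (\<lambda>n. f n > 0 \<and> f (Suc n) > 0 \<and> f (Suc n) / f n < c) sequentially"
    using pos eventually_sequentially_Suc[THEN iffD2, OF pos] order_tendstoD(2)[OF lim \<open>l < c\<close>]
    by eventually_elim blast
  then obtain N where N: "\<And>n. n \<ge> N \<Longrightarrow> f n > 0 \<and> f (Suc n) > 0 \<and> f (Suc n) / f n < c"
    unfolding eventually_sequentially by blast
  show ?thesis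
  proof (rule summable_ratio_test[OF \<open>c < 1\<close>])
    fix n assume "n \<ge> N"
    with N[of n] show "norm (f (Suc n)) \<le> c * norm (f n)"
      by (auto simp: divide_less_eq intro: less_imp_le)
  qed
qed

lemma summable_pochhammer_majorant:
  fixes A R r :: real
  assumes "0 < A" "0 < R" "0 < r" "r < 1"
  shows "summable (\<lambda>k. pochhammer A k * pochhammer R k * r ^ k / (fact k * fact (k - N)))"
proof (rule summable_ratio_test_tendsto)
  let ?f = "\<lambda>k. pochhammer A k * pochhammer R k * r ^ k / (fact k * fact (k - N))"
  let ?q = "\<lambda>k::nat. (A + real k) * (R + real k) * r / ((real k + 1) * (real k + 1 - real N))"
  show "eventually (\<lambda>k. ?f k > 0) sequentially"
    using assms by (intro always_eventually allI divide_pos_pos mult_pos_pos pochhammer_pos) auto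
  have ratio: "eventually (\<lambda>k. ?q k = ?f (Suc k) / ?f k) sequentially"
    using eventually_ge_at_top[of N]
  proof eventually_elim
    case (elim k)
    then have "fact (Suc k - N) = (fact (k - N) :: real) * (real k + 1 - real N)"
      by (simp add: Suc_diff_le)
    then have step: "?f (Suc k) = ?f k * ?q k"
      by (simp add: pochhammer_Suc divide_inverse mult_ac)
    have "?f k \<noteq> 0"
      using assms by (intro divide_pos_pos mult_pos_pos pochhammer_pos less_imp_neq[symmetric]) auto
    then show ?case unfolding step by simp
  qed
  have "(?q \<longlongrightarrow> r) sequentially" by real_asymp
  from Lim_transform_eventually[OF this ratio]
  show "((\<lambda>k. ?f (Suc k) / ?f k) \<longlongrightarrow> r) sequentially" .
qed (fact \<open>r < 1\<close>)

definition rhyp2f1_term :: "complex \<Rightarrow> complex \<Rightarrow> complex \<Rightarrow> complex \<Rightarrow> nat \<Rightarrow> complex" where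
  "rhyp2f1_term a b c z k = pochhammer a k * pochhammer b k * rGamma (c + of_nat k) / fact k * z ^ k"

definition rhyp2f1 :: "complex \<Rightarrow> complex \<Rightarrow> complex \<Rightarrow> complex \<Rightarrow> complex" where
  "rhyp2f1 a b c z = suminf (rhyp2f1_term a b c z)"

lemma norm_rhyp2f1_term_le:
  assumes "1 \<le> Re (c + of_nat N)" "N \<le> k" "norm a \<le> A" "norm b \<le> R" "norm z \<le> r"
  shows "norm (rhyp2f1_term a b c z k) \<le> norm (rGamma (c + of_nat N))
           * (pochhammer A k * pochhammer R k * r ^ k / (fact k * fact (k - N)))"
proof -
  have nG: "norm (rGamma (c + of_nat k)) \<le> norm (rGamma (c + of_nat N)) / fact (k - N)"
    using norm_rGamma_add_nat_le[OF assms(1), of "k - N"] assms(2) by (simp add: add.assoc)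
  have na: "norm (pochhammer a k) \<le> pochhammer A k"
    using norm_pochhammer_le[of a k] pochhammer_mono[OF norm_ge_zero assms(3)] by (rule order_trans)
  have nb: "norm (pochhammer b k) \<le> pochhammer R k"
    using norm_pochhammer_le[of b k] pochhammer_mono[OF norm_ge_zero assms(4)] by (rule order_trans)
  have nz: "norm z ^ k \<le> r ^ k" by (intro power_mono assms(5)) simp
  have "norm (rhyp2f1_term a b c z k)
      = norm (pochhammer a k) * norm (pochhammer b k) * norm (rGamma (c + of_nat k)) / fact k * norm z ^ k"
    by (simp add: rhyp2f1_term_def norm_mult norm_divide norm_power)
  also have "\<dots> \<le> pochhammer A k * pochhammer R k * (norm (rGamma (c + of_nat N)) / fact (k - N))
      / fact k * r ^ k"
    using order_trans[OF norm_ge_zero na] order_trans[OF norm_ge_zero nb]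
    by (intro mult_mono divide_right_mono na nb nG nz) auto
  also have "\<dots> = norm (rGamma (c + of_nat N))
      * (pochhammer A k * pochhammer R k * r ^ k / (fact k * fact (k - N)))"
    by (simp add: mult_ac)
  finally show ?thesis .
qed

lemma uniform_limit_rhyp2f1:
  fixes a b c s x z :: complex
  assumes z: "norm z < 1"
  shows "uniform_limit (cball x 1) (\<lambda>n \<alpha>. \<Sum>k<n. rhyp2f1_term a (b + s*\<alpha>) (c + s*\<alpha>) z k)
           (\<lambda>\<alpha>. rhyp2f1 a (b + s*\<alpha>) (c + s*\<alpha>) z) sequentially"
proof -
  define R where "R = norm x + 1"
  define A where "A = norm a + 1"
  define R' where "R' = norm b + norm s * R + 1"
  define r where "r = (1 + norm z) / 2"
  define N where "N = nat \<lceil>\<bar>Re c\<bar> + norm s * R\<rceil> + 1"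
  define f where "f k = pochhammer A k * pochhammer R' k * r ^ k / (fact k * fact (k - N))" for k
  have pos: "0 < A" "0 < R'" "0 < r" "r < 1"
    using z by (simp_all add: A_def R'_def R_def r_def add_nonneg_pos add_pos_nonneg)
  have norm_s\<alpha>: "norm (s * \<alpha>) \<le> norm s * R" if "\<alpha> \<in> cball x 1" for \<alpha>
    using that norm_triangle_ineq2[of \<alpha> x] unfolding norm_mult
    by (intro mult_left_mono) (auto simp: R_def dist_norm norm_minus_commute)
  have "compact ((\<lambda>\<alpha>. rGamma (c + s*\<alpha> + of_nat N)) ` cball x 1)"
    by (intro compact_continuous_image holomorphic_on_imp_continuous_on holomorphic_intros) auto
  then obtain B where B: "\<And>\<alpha>. \<alpha> \<in> cball x 1 \<Longrightarrow> norm (rGamma (c + s*\<alpha> + of_nat N)) \<le> B"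
    by (metis (no_types, lifting) compact_imp_bounded bounded_iff image_eqI)
  have "summable (\<lambda>k. B * f k)"
    unfolding f_def by (intro summable_mult summable_pochhammer_majorant pos)
  moreover have "\<forall>\<^sub>F k in sequentially. \<forall>\<alpha>\<in>cball x 1.
      norm (rhyp2f1_term a (b + s*\<alpha>) (c + s*\<alpha>) z k) \<le> B * f k"
    using eventually_ge_at_top[of N]
  proof eventually_elim
    case (elim k)
    show ?case
    proof
      fix \<alpha> assume \<alpha>: "\<alpha> \<in> cball x 1"
      have "- Re (s*\<alpha>) \<le> norm s * R"
        using abs_Re_le_cmod[of "s*\<alpha>"] norm_s\<alpha>[OF \<alpha>] by linarith
      moreover have "\<bar>Re c\<bar> + norm s * R + 1 \<le> real N" unfolding N_def by linarith
      ultimately have "1 \<le> Re (c + s*\<alpha> + of_nat N)" by simp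
      moreover have "norm (b + s*\<alpha>) \<le> R'"
        using norm_triangle_ineq[of b "s*\<alpha>"] norm_s\<alpha>[OF \<alpha>] by (simp add: R'_def)
      moreover have "norm a \<le> A" "norm z \<le> r" using z by (simp_all add: A_def r_def)
      ultimately have "norm (rhyp2f1_term a (b + s*\<alpha>) (c + s*\<alpha>) z k)
          \<le> norm (rGamma (c + s*\<alpha> + of_nat N)) * f k"
        unfolding f_def using elim by (intro norm_rhyp2f1_term_le) auto
      also have "\<dots> \<le> B * f k"
        using B[OF \<alpha>] pos
        by (intro mult_right_mono) (auto simp: f_def intro!: divide_nonneg_nonneg mult_nonneg_nonneg pochhammer_nonneg)
      finally show "norm (rhyp2f1_term a (b + s*\<alpha>) (c + s*\<alpha>) z k) \<le> B * f k" .
    qed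
  qed
  ultimately show ?thesis
    unfolding rhyp2f1_def by (intro Weierstrass_m_test_ev) auto
qed

lemma holomorphic_on_rhyp2f1:
  assumes "norm z < 1"
  shows "(\<lambda>\<alpha>. rhyp2f1 a (b + s*\<alpha>) (c + s*\<alpha>) z) holomorphic_on A"
proof -
  have "(\<lambda>\<alpha>. rhyp2f1 a (b + s*\<alpha>) (c + s*\<alpha>) z) holomorphic_on UNIV"
  proof (rule holomorphic_uniform_sequence)
    show "(\<lambda>\<alpha>. \<Sum>k<n. rhyp2f1_term a (b + s*\<alpha>) (c + s*\<alpha>) z k) holomorphic_on UNIV" for n
      unfolding rhyp2f1_term_def pochhammer_prod by (intro holomorphic_intros) auto
    show "\<exists>d>0. cball x d \<subseteq> UNIV \<and> uniform_limit (cball x d)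
            (\<lambda>n \<alpha>. \<Sum>k<n. rhyp2f1_term a (b + s*\<alpha>) (c + s*\<alpha>) z k)
            (\<lambda>\<alpha>. rhyp2f1 a (b + s*\<alpha>) (c + s*\<alpha>) z) sequentially" for x
      using uniform_limit_rhyp2f1[OF assms] by (intro exI[of _ 1]) auto
  qed simp
  then show ?thesis by (rule holomorphic_on_subset) auto
qed

lemma rhyp2f1_sums:
  assumes "norm z < 1"
  shows "rhyp2f1_term a b c z sums rhyp2f1 a b c z"
  using tendsto_uniform_limitI[OF uniform_limit_rhyp2f1[OF assms, where s=0 and x=0], of 0]
  by (simp add: sums_def)

lemma summable_rhyp2f1_term: "norm z < 1 \<Longrightarrow> summable (rhyp2f1_term a b c z)"
  using rhyp2f1_sums sums_summable by blast

lemma rhyp2f1_commute: "rhyp2f1 a b c z = rhyp2f1 b a c z"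
  unfolding rhyp2f1_def rhyp2f1_term_def[abs_def] by (simp add: mult_ac)

lemma hyp2f1_eq_Gamma_mult_rhyp2f1:
  assumes z: "norm z < 1" and c: "c \<notin> \<int>\<^sub>\<le>\<^sub>0"
  shows "hyp2f1 a b c z = Gamma c * rhyp2f1 a b c z"
proof -
  have "pochhammer a n * pochhammer b n / (pochhammer c n * fact n) * z ^ n
        = Gamma c * rhyp2f1_term a b c z n" for n
  proof -
    have "pochhammer c n \<noteq> 0" using c by (metis pochhammer_eq_0_imp_nonpos_Int)
    moreover have "rGamma c = pochhammer c n * rGamma (c + of_nat n)" by (rule pochhammer_rGamma)
    moreover have "Gamma c * rGamma c = 1" using c by (simp add: rGamma_inverse_Gamma Gamma_nonzero)
    ultimately show ?thesis by (simp add: rhyp2f1_term_def field_simps)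
  qed
  then have "hyp2f1 a b c z = (\<Sum>n. Gamma c * rhyp2f1_term a b c z n)"
    by (simp add: hyp2f1_def)
  also have "\<dots> = Gamma c * rhyp2f1 a b c z"
    unfolding rhyp2f1_def by (rule suminf_mult[OF summable_rhyp2f1_term[OF z]])
  finally show ?thesis .
qed

lemma rhyp2f1_one_minus_nat:
  assumes z: "norm z < 1"
  shows "rhyp2f1 a b (1 - of_nat n) z
       = pochhammer a n * pochhammer b n * z ^ n * rhyp2f1 (a + of_nat n) (b + of_nat n) (1 + of_nat n) z"
proof -
  let ?f = "rhyp2f1_term a b (1 - of_nat n) z"
  let ?g = "rhyp2f1_term (a + of_nat n) (b + of_nat n) (1 + of_nat n) z"
  let ?C = "pochhammer a n * pochhammer b n * z ^ n"
  have rGamma_nat: "rGamma (1 + of_nat m :: complex) = inverse (fact m)" for m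
    using Gamma_fact[of m, where 'a=complex] by (simp add: rGamma_inverse_Gamma add.commute)
  have head: "?f i = 0" if "i < n" for i
  proof -
    have "1 - of_nat n + of_nat i = (- of_nat (n - 1 - i) :: complex)" using that by simp
    then show ?thesis by (simp add: rhyp2f1_term_def rGamma_eq_zero_iff)
  qed
  have tail: "?f (j + n) = ?C * ?g j" for j
  proof -
    have "rGamma (1 - of_nat n + of_nat (j + n) :: complex) = inverse (fact j)"
      "rGamma (1 + of_nat n + of_nat j :: complex) = inverse (fact (j + n))"
      using rGamma_nat[of j] rGamma_nat[of "j + n"] by (simp_all add: algebra_simps)
    moreover have "pochhammer x (j + n) = pochhammer x n * pochhammer (x + of_nat n) j" for x :: complex
      using pochhammer_product'[of x n j] by (simp add: add.commute)
    ultimately show ?thesis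
      unfolding rhyp2f1_term_def by (simp add: power_add field_simps)
  qed
  have "?f sums rhyp2f1 a b (1 - of_nat n) z" by (rule rhyp2f1_sums[OF z])
  then have "(\<lambda>j. ?f (j + n)) sums (rhyp2f1 a b (1 - of_nat n) z - (\<Sum>i<n. ?f i))"
    by (rule sums_split_initial_segment)
  then have "(\<lambda>j. ?C * ?g j) sums rhyp2f1 a b (1 - of_nat n) z"
    using head tail by simp
  moreover have "(\<lambda>j. ?C * ?g j) sums (?C * rhyp2f1 (a + of_nat n) (b + of_nat n) (1 + of_nat n) z)"
    by (intro sums_mult rhyp2f1_sums z)
  ultimately show ?thesis by (rule sums_unique2)
qed

lemma eventually_nhds_nonzero_if_holomorphic:
  assumes "f holomorphic_on S" "open S" "z \<in> S" "f z \<noteq> 0"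
  shows "eventually (\<lambda>w. f w \<noteq> 0) (nhds z)"
proof -
  have "isCont f z"
    using assms by (meson holomorphic_on_imp_continuous_on continuous_on_eq_continuous_at)
  then have "(f \<longlongrightarrow> f z) (nhds z)" by (simp add: isCont_def tendsto_at_iff_tendsto_nhds)
  then show ?thesis using assms(4) by (rule tendsto_imp_eventually_ne)
qed

lemma holomorphic_quotient_extension:
  fixes D s :: "complex \<Rightarrow> complex"
  assumes S: "open S" and hD: "D holomorphic_on S" and hs: "s holomorphic_on S"
    and zeros: "\<And>z. z \<in> S \<Longrightarrow> s z = 0 \<Longrightarrow> D z = 0 \<and> deriv s z \<noteq> 0"
  shows "\<exists>Q. Q holomorphic_on S \<and> (\<forall>z\<in>S. s z \<noteq> 0 \<longrightarrow> Q z = D z / s z)"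
proof -
  define Q where "Q z = (if s z = 0 then deriv D z / deriv s z else D z / s z)" for z
  have analytic_at: "f analytic_on {z}" if "f holomorphic_on S" "z \<in> S" for f z
    using that S by (intro analytic_at[THEN iffD2] exI[of _ S]) simp
  have "Q analytic_on {z}" if z: "z \<in> S" for z
  proof (cases "s z = 0")
    case False
    have ev: "eventually (\<lambda>w. D w / s w = Q w) (nhds z)"
      using eventually_nhds_nonzero_if_holomorphic[OF hs S z False] by eventually_elim (simp add: Q_def)
    have "(\<lambda>w. D w / s w) analytic_on {z}"
      using False by (intro analytic_on_divide analytic_at hD hs z) auto
    then show ?thesis using analytic_at_cong[OF ev refl] by simp
  next
    case True
    then have sz: "s z = 0" .
    define d1 where "d1 w = (if w = z then deriv D z else (D w - D z) / (w - z))" for w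
    define s1 where "s1 w = (if w = z then deriv s z else (s w - s z) / (w - z))" for w
    have hd1: "d1 holomorphic_on S" unfolding d1_def by (rule pole_lemma_open[OF hD S])
    have hs1: "s1 holomorphic_on S" unfolding s1_def by (rule pole_lemma_open[OF hs S])
    have "s1 z \<noteq> 0" "D z = 0" using zeros[OF z sz] by (simp_all add: s1_def)
    have ev: "eventually (\<lambda>w. d1 w / s1 w = Q w) (nhds z)"
      using eventually_nhds_nonzero_if_holomorphic[OF hs1 S z \<open>s1 z \<noteq> 0\<close>]
    proof eventually_elim
      case (elim w)
      show ?case
      proof (cases "w = z")
        case False
        with elim sz have "s w \<noteq> 0" by (simp add: s1_def)
        with False sz \<open>D z = 0\<close> show ?thesis by (simp add: d1_def s1_def Q_def)
      qed (simp add: d1_def s1_def Q_def sz)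
    qed
    have "(\<lambda>w. d1 w / s1 w) analytic_on {z}"
      using \<open>s1 z \<noteq> 0\<close> by (intro analytic_on_divide analytic_at hd1 hs1 z) auto
    then show ?thesis using analytic_at_cong[OF ev refl] by simp
  qed
  then have "Q holomorphic_on S"
    using analytic_on_analytic_at[of Q S] by (blast intro: analytic_imp_holomorphic)
  then show ?thesis by (intro exI[of _ Q]) (simp add: Q_def)
qed

definition w_reg :: "real \<Rightarrow> complex \<Rightarrow> complex" where
  "w_reg t \<alpha> = exp ((1 - \<alpha>) * complex_of_real t) * complex_of_real ((exp (2*t) - 1) powr (-1/2))
     * rhyp2f1 (-1/2) (-1/2 + \<alpha>) (1 + \<alpha>) (complex_of_real (exp (-2*t)))"

definition D_reg :: "real \<Rightarrow> complex \<Rightarrow> complex" where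
  "D_reg t \<alpha> = w_reg t (- \<alpha>) * rGamma (3/2 + \<alpha>) - w_reg t \<alpha> * rGamma (3/2 - \<alpha>)"

lemma norm_exp_minus_two_less_one: "0 < t \<Longrightarrow> norm (complex_of_real (exp (-2*t))) < 1"
  by simp

lemma holomorphic_on_w_reg: "0 < t \<Longrightarrow> w_reg t holomorphic_on A"
  unfolding w_reg_def[abs_def]
  using holomorphic_on_rhyp2f1[OF norm_exp_minus_two_less_one, where b="-1/2" and c=1 and s=1]
  by (intro holomorphic_intros) auto

lemma holomorphic_on_D_reg:
  assumes t: "0 < t"
  shows "D_reg t holomorphic_on A"
proof -
  have "(\<lambda>\<alpha>. w_reg t (- \<alpha>)) holomorphic_on A"
    by (rule holomorphic_on_compose_gen[OF _ holomorphic_on_w_reg[OF t], unfolded o_def])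
      (auto intro: holomorphic_intros)
  then show ?thesis
    unfolding D_reg_def[abs_def] by (intro holomorphic_intros holomorphic_on_w_reg t)
qed

lemma pochhammer_rGamma_three_halves:
  "pochhammer (-1/2) n * pochhammer (-1/2 - of_nat n) n * rGamma (3/2 + of_nat n)
   = rGamma (3/2 - of_nat n :: complex)"
proof -
  have "rGamma (3/2 - of_nat n :: complex) = pochhammer (3/2 - of_nat n) n * rGamma (3/2)"
    using pochhammer_rGamma[of "3/2 - of_nat n :: complex" n] by simp
  moreover have "rGamma (3/2 :: complex) = pochhammer (3/2) n * rGamma (3/2 + of_nat n)"
    by (rule pochhammer_rGamma)
  moreover have "pochhammer (-1/2 - of_nat n :: complex) n = (-1)^n * pochhammer (3/2) n"
  proof -
    have "-1/2 - of_nat n = - (1/2 + of_nat n :: complex)"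
      "1/2 + of_nat n - of_nat n + 1 = (3/2 :: complex)"
      by simp_all
    then show ?thesis by (simp only: pochhammer_minus)
  qed
  moreover have "pochhammer (3/2 - of_nat n :: complex) n = (-1)^n * pochhammer (-1/2) n"
  proof -
    have "3/2 - of_nat n = - (of_nat n - 3/2 :: complex)"
      "of_nat n - 3/2 - of_nat n + 1 = (-1/2 :: complex)"
      by simp_all
    then show ?thesis by (simp only: pochhammer_minus)
  qed
  ultimately show ?thesis by (simp add: algebra_simps)
qed

lemma w_reg_minus_nat:
  assumes "0 < t"
  shows "w_reg t (- of_nat n)
       = pochhammer (-1/2) n * pochhammer (-1/2 - of_nat n) n * w_reg t (of_nat n)"
proof -
  define z where "z = complex_of_real (exp (-2*t))"
  define P where "P = complex_of_real ((exp (2*t) - 1) powr (-1/2))"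
  have shift: "rhyp2f1 (-1/2) (-1/2 - of_nat n) (1 - of_nat n) z
      = pochhammer (-1/2) n * pochhammer (-1/2 - of_nat n) n * z ^ n
        * rhyp2f1 (-1/2) (-1/2 + of_nat n) (1 + of_nat n) z"
    using rhyp2f1_one_minus_nat[OF norm_exp_minus_two_less_one[OF assms], of "-1/2" "-1/2 - of_nat n" n]
      rhyp2f1_commute[of "-1/2 + of_nat n" "-1/2"]
    by (simp add: z_def add.commute)
  have exp_shift:
    "exp ((1 + of_nat n) * complex_of_real t) * z ^ n = exp ((1 - of_nat n) * complex_of_real t)"
  proof -
    have "z ^ n = exp (of_nat n * complex_of_real (-2*t))"
      unfolding z_def exp_of_real[symmetric] by (rule exp_of_nat_mult[symmetric])
    then show ?thesis by (simp add: exp_add[symmetric] algebra_simps)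
  qed
  have w: "w_reg t \<alpha> = exp ((1 - \<alpha>) * complex_of_real t) * P * rhyp2f1 (-1/2) (-1/2 + \<alpha>) (1 + \<alpha>) z" for \<alpha>
    unfolding w_reg_def z_def P_def ..
  have "w_reg t (- of_nat n)
      = exp ((1 + of_nat n) * complex_of_real t) * P * rhyp2f1 (-1/2) (-1/2 - of_nat n) (1 - of_nat n) z"
    unfolding w by (simp only: diff_minus_eq_add add_uminus_conv_diff)
  also have "\<dots> = pochhammer (-1/2) n * pochhammer (-1/2 - of_nat n) n
      * ((exp ((1 + of_nat n) * complex_of_real t) * z ^ n) * P
         * rhyp2f1 (-1/2) (-1/2 + of_nat n) (1 + of_nat n) z)"
    unfolding shift by (simp only: mult_ac)
  also have "\<dots> = pochhammer (-1/2) n * pochhammer (-1/2 - of_nat n) n * w_reg t (of_nat n)"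
    unfolding exp_shift w ..
  finally show ?thesis .
qed

lemma D_reg_of_nat_eq_0:
  assumes "0 < t"
  shows "D_reg t (of_nat n) = 0"
proof -
  have "D_reg t (of_nat n) = w_reg t (of_nat n)
      * (pochhammer (-1/2) n * pochhammer (-1/2 - of_nat n) n * rGamma (3/2 + of_nat n)
         - rGamma (3/2 - of_nat n))"
    unfolding D_reg_def w_reg_minus_nat[OF assms] by (simp only: algebra_simps)
  then show ?thesis by (simp only: pochhammer_rGamma_three_halves diff_self mult_zero_right)
qed

lemma Re_csqrt_pos: "w \<notin> \<real>\<^sub>\<le>\<^sub>0 \<Longrightarrow> 0 < Re (csqrt w)"
proof (rule ccontr)
  assume w: "w \<notin> \<real>\<^sub>\<le>\<^sub>0" and "\<not> 0 < Re (csqrt w)"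
  then have Re0: "Re (csqrt w) = 0" using Re_csqrt[of w] by linarith
  have "Re w = Re ((csqrt w)\<^sup>2)" by simp
  also have "\<dots> = - (Im (csqrt w) * Im (csqrt w))"
    using Re0 by (simp add: power2_eq_square del: power2_csqrt)
  finally have "Re w \<le> 0" by (metis neg_le_0_iff_le zero_le_square)
  have "Im w = Im ((csqrt w)\<^sup>2)" by simp
  also have "\<dots> = 0" using Re0 by (simp add: power2_eq_square del: power2_csqrt)
  finally have "Im w = 0" .
  with w \<open>Re w \<le> 0\<close> show False by (simp add: complex_nonpos_Reals_iff)
qed

lemma holomorphic_on_compose_csqrt_cut_plane:
  assumes "F holomorphic_on {\<alpha>. 0 < Re \<alpha>}"
  shows "(\<lambda>lam. F (csqrt (1/4 - lam))) holomorphic_on - (complex_of_real ` {1/4..})"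
proof -
  have cut: "1/4 - lam \<notin> \<real>\<^sub>\<le>\<^sub>0" if "lam \<in> - (complex_of_real ` {1/4..})" for lam
    using that by (auto simp: complex_nonpos_Reals_iff complex_eq_iff intro!: image_eqI[of _ _ "Re lam"])
  then have "(\<lambda>lam. csqrt (1/4 - lam)) ` (- complex_of_real ` {1/4..}) \<subseteq> {\<alpha>. 0 < Re \<alpha>}"
    using Re_csqrt_pos by blast
  then show ?thesis
    using cut by (intro holomorphic_on_compose_gen[OF _ assms, unfolded o_def] holomorphic_intros) auto
qed

lemma alpha_eq_csqrt:
  assumes "Im lam \<noteq> 0"
  shows "alpha lam = csqrt (1/4 - lam)"
proof -
  define w where "w = 1/4 - lam"
  have "Im w \<noteq> 0" using assms by (simp add: w_def)
  then have "w \<noteq> 0" and phase: "phase w = Arg w" by (auto simp: phase_def Arg_eq_pi)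
  have "csqrt w = exp (Ln w / 2)" by (rule csqrt_exp_Ln[OF \<open>w \<noteq> 0\<close>])
  also have "\<dots> = exp (complex_of_real (ln (norm w) / 2)) * exp (\<i> * complex_of_real (Arg w / 2))"
    using Ln_Arg[OF \<open>w \<noteq> 0\<close>] by (simp add: exp_add[symmetric] field_simps)
  also have "exp (complex_of_real (ln (norm w) / 2)) = complex_of_real (sqrt (norm w))"
  proof -
    have "exp (ln (norm w) / 2) = sqrt (norm w)"
      using \<open>w \<noteq> 0\<close> by (simp add: powr_half_sqrt[symmetric] powr_def)
    then show ?thesis by (simp only: exp_of_real)
  qed
  finally show ?thesis by (simp add: alpha_def w_def[symmetric] phase)
qed

lemma w1_eq_Gamma_mult_w_reg:
  assumes "1 + alpha lam \<notin> \<int>\<^sub>\<le>\<^sub>0" "0 < t"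
  shows "w1 lam t = Gamma (1 + alpha lam) * w_reg t (alpha lam)"
  using hyp2f1_eq_Gamma_mult_rhyp2f1[OF norm_exp_minus_two_less_one[OF assms(2)] assms(1)]
  by (simp add: w1_def w_reg_def mult_ac)

lemma w2_eq_Gamma_mult_w_reg:
  assumes "1 - alpha lam \<notin> \<int>\<^sub>\<le>\<^sub>0" "0 < t"
  shows "w2 lam t = Gamma (1 - alpha lam) * w_reg t (- alpha lam)"
  using hyp2f1_eq_Gamma_mult_rhyp2f1[OF norm_exp_minus_two_less_one[OF assms(2)] assms(1)]
  by (simp add: w2_def w_reg_def mult_ac)

lemma not_nonpos_Ints_if_Im_nonzero: "Im w \<noteq> 0 \<Longrightarrow> w \<notin> \<int>\<^sub>\<le>\<^sub>0"
  by (auto elim!: nonpos_Ints_cases)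

lemma sin_pi_nonzero_if_Im_nonzero: "Im z \<noteq> 0 \<Longrightarrow> sin (of_real pi * z) \<noteq> 0"
  by (auto simp: sin_eq_0)

lemma G2_eq_w_reg:
  assumes Im: "Im (alpha lam) \<noteq> 0" and "0 < y" "0 < eta"
  shows "G2 y eta lam = of_real pi / 2 * Gamma (3/2 + alpha lam) * w_reg (max y eta) (alpha lam)
           * D_reg (min y eta) (alpha lam) / sin (of_real pi * alpha lam)"
proof -
  define \<alpha> where "\<alpha> = alpha lam"
  have nonzero: "Gamma (1 + \<alpha>) \<noteq> 0" "Gamma (1 - \<alpha>) \<noteq> 0" "Gamma (3/2 + \<alpha>) \<noteq> 0"
    "Gamma (3/2 - \<alpha>) \<noteq> 0" "\<alpha> \<noteq> 0" "sin (of_real pi * \<alpha>) \<noteq> 0"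
    using Im by (auto simp: \<alpha>_def
      intro!: Gamma_nonzero not_nonpos_Ints_if_Im_nonzero sin_pi_nonzero_if_Im_nonzero)
  have "Gamma (1 + \<alpha>) * Gamma (1 - \<alpha>) = \<alpha> * (Gamma \<alpha> * Gamma (1 - \<alpha>))"
    using Gamma_plus1[OF not_nonpos_Ints_if_Im_nonzero, of \<alpha>] Im by (simp add: \<alpha>_def add.commute)
  also have "\<dots> = \<alpha> * of_real pi / sin (of_real pi * \<alpha>)" by (simp add: Gamma_reflection_complex)
  finally have reflection: "Gamma (1 + \<alpha>) * Gamma (1 - \<alpha>) = \<alpha> * of_real pi / sin (of_real pi * \<alpha>)" .
  have w1: "w1 lam t = Gamma (1 + \<alpha>) * w_reg t \<alpha>" and w2: "w2 lam t = Gamma (1 - \<alpha>) * w_reg t (- \<alpha>)"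
    if "0 < t" for t
    using Im that by (auto simp: \<alpha>_def
      intro!: w1_eq_Gamma_mult_w_reg w2_eq_Gamma_mult_w_reg not_nonpos_Ints_if_Im_nonzero)
  have "G2 y eta lam = w1 lam (min y eta) * w1 lam (max y eta) / (2 * \<alpha> * a_coef lam)
      + w2 lam (min y eta) * w1 lam (max y eta) / (2 * \<alpha>)"
    by (simp add: G2_def \<alpha>_def min_def max_def mult.commute)
  also have "\<dots> = Gamma (1 + \<alpha>) * Gamma (1 - \<alpha>) / (2 * \<alpha>) * Gamma (3/2 + \<alpha>) * w_reg (max y eta) \<alpha>
      * D_reg (min y eta) \<alpha>"
    using nonzero assms(2,3)
    by (simp add: w1 w2 a_coef_def D_reg_def rGamma_inverse_Gamma \<alpha>_def[symmetric] field_simps)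
  also have "\<dots> = of_real pi / 2 * Gamma (3/2 + \<alpha>) * w_reg (max y eta) \<alpha>
      * D_reg (min y eta) \<alpha> / sin (of_real pi * \<alpha>)"
    unfolding reflection using nonzero by (simp add: field_simps)
  finally show ?thesis by (simp add: \<alpha>_def)
qed

lemma sin_pi_eq_0_imp_nat:
  assumes "0 < Re z" "sin (of_real pi * z) = 0"
  obtains n :: nat where "z = of_nat n"
proof -
  obtain k :: int where "of_real pi * z = of_real (of_int k * pi)"
    using assms(2) by (auto simp: sin_eq_0)
  then have "z = of_int k" by (simp add: mult.commute)
  with assms(1) show ?thesis by (intro that[of "nat k"]) simp
qed

lemma G2_alpha_extension:
  assumes "0 < m" "0 < M"
  obtains F where "F holomorphic_on {\<alpha>. 0 < Re \<alpha>}"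
    "\<And>\<alpha>. 0 < Re \<alpha> \<Longrightarrow> sin (of_real pi * \<alpha>) \<noteq> 0 \<Longrightarrow>
       F \<alpha> = of_real pi / 2 * Gamma (3/2 + \<alpha>) * w_reg M \<alpha> * D_reg m \<alpha> / sin (of_real pi * \<alpha>)"
proof -
  define S where "S = {\<alpha>::complex. 0 < Re \<alpha>}"
  have "D_reg m z = 0 \<and> deriv (\<lambda>\<alpha>. sin (of_real pi * \<alpha>)) z \<noteq> 0"
    if "z \<in> S" "sin (of_real pi * z) = 0" for z
  proof -
    have "0 < Re z" using that(1) by (simp add: S_def)
    from sin_pi_eq_0_imp_nat[OF this that(2)] obtain n :: nat where n: "z = of_nat n" .
    have "deriv (\<lambda>\<alpha>. sin (of_real pi * \<alpha>)) z = cos (of_real pi * z) * of_real pi"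
      by (rule DERIV_imp_deriv) (auto intro!: derivative_eq_intros)
    moreover have "cos (of_real pi * z) = complex_of_real ((-1) ^ n)"
      unfolding n by (metis cos_npi cos_of_real mult.commute of_real_mult of_real_of_nat_eq)
    ultimately show ?thesis by (simp add: n D_reg_of_nat_eq_0[OF assms(1)])
  qed
  then obtain Q where Q: "Q holomorphic_on S"
      "\<And>\<alpha>. \<alpha> \<in> S \<Longrightarrow> sin (of_real pi * \<alpha>) \<noteq> 0 \<Longrightarrow> Q \<alpha> = D_reg m \<alpha> / sin (of_real pi * \<alpha>)"
    using holomorphic_quotient_extension[of S "D_reg m" "\<lambda>\<alpha>. sin (of_real pi * \<alpha>)"]
      holomorphic_on_D_reg[OF assms(1)]
    by (auto simp: S_def open_halfspace_Re_gt intro: holomorphic_intros)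
  have "(\<lambda>\<alpha>. of_real pi / 2 * Gamma (3/2 + \<alpha>) * w_reg M \<alpha> * Q \<alpha>) holomorphic_on S"
  proof (intro holomorphic_intros holomorphic_on_w_reg[OF assms(2)] Q(1))
    show "3/2 + \<alpha> \<notin> \<int>\<^sub>\<le>\<^sub>0" if "\<alpha> \<in> S" for \<alpha>
      using that by (auto simp: S_def elim!: nonpos_Ints_cases dest!: arg_cong[of _ _ Re])
  qed
  then show ?thesis using that Q(2) by (auto simp: S_def)
qed

theorem lemma4p3:
  fixes y eta :: real
  assumes "0 < y" and "0 < eta"
  shows "\<exists>g. g holomorphic_on (- (complex_of_real ` {1/4..})) \<and>
             (\<forall>lam. Im lam \<noteq> 0 \<longrightarrow> g lam = G2 y eta lam)"
proof -
  have pos: "0 < min y eta" "0 < max y eta" using assms by simp_all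
  obtain F where F: "F holomorphic_on {\<alpha>. 0 < Re \<alpha>}"
    "\<And>\<alpha>. 0 < Re \<alpha> \<Longrightarrow> sin (of_real pi * \<alpha>) \<noteq> 0 \<Longrightarrow>
       F \<alpha> = of_real pi / 2 * Gamma (3/2 + \<alpha>) * w_reg (max y eta) \<alpha> * D_reg (min y eta) \<alpha>
         / sin (of_real pi * \<alpha>)"
    using G2_alpha_extension[OF pos] by blast
  have "(\<lambda>lam. F (csqrt (1/4 - lam))) holomorphic_on - (complex_of_real ` {1/4..})"
    by (rule holomorphic_on_compose_csqrt_cut_plane[OF F(1)])
  moreover have "F (csqrt (1/4 - lam)) = G2 y eta lam" if "Im lam \<noteq> 0" for lam
  proof -
    have \<alpha>: "alpha lam = csqrt (1/4 - lam)" by (rule alpha_eq_csqrt[OF that])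
    have "Im (alpha lam) \<noteq> 0"
      unfolding \<alpha> Im_csqrt_eq_0_iff using that by (simp add: complex_nonneg_Reals_iff)
    moreover have "0 < Re (alpha lam)"
      unfolding \<alpha> using that by (intro Re_csqrt_pos) (simp add: complex_nonpos_Reals_iff)
    ultimately show ?thesis
      using F(2) G2_eq_w_reg[OF _ assms] sin_pi_nonzero_if_Im_nonzero by (simp add: \<alpha>[symmetric])
  qed
  ultimately show ?thesis by blast
qed

end
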